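(* Let $k\ge 1$ and let $H$ be a connected $k$-regular $k$-edge-colorable graph with no loops or semi-edges (multiple ordinary edges allowed). Let $G$ be a connected simple $k$-regular graph and $u\in V(G)$ a vertex such that for every $x\in V(H)$ and every bijection $E_G(u)\to E_H(x)$ there is a covering projection from $G$ to $H$ mapping $u$ to $x$ and extending that bijection. Let $G_u$ be obtained from $G$ by splitting $u$ into $k$ pendant vertices: each edge $e\in E_G(u)$ is kept, but its end-vertex $u$ is replaced by a new vertex $u_e$ of degree 1. Then: (a) for every $x\in V(H)$ and every bijection $\sigma_x:E_G(u)\to E_H(x)$ there is a partial covering projection from $G_u$ onto $H$ that extends $\sigma_x$ and maps every $u_e$, $e\in E_G(u)$, to $x$; (b) in every partial covering projection from $G_u$ onto $H$, all the pendant vertices $u_e$, $e\in E_G(u)$, are mapped to the same vertex of $H$; (c) in every partial covering projection from $G_u$ onto $H$, the $k$ pendant edges are mapped to pairwise distinct edges of $H$ (incident with the common image of the pendant vertices).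
   Context: $E_G(u)$ denotes the set of edges of $G$ incident with $u$. A covering projection between graphs without loops and semi-edges is a map sending vertices to vertices and edges to edges, preserving incidences, such that for every edge $xy$ of the target its preimage is a perfect matching between the preimages of $x$ and $y$. A partial covering projection from $G'$ onto $H$ is a map $f:V(G')\cup E(G')\to V(H)\cup E(H)$ that is surjective on vertices and on edges, sends vertices to vertices and edges to edges, preserves incidences, and such that for every edge $xy$ of $H$ its preimage is a matching (not necessarily perfect) each of whose edges joins a vertex of $f^{-1}(x)$ to a vertex of $f^{-1}(y)$. *)

theory Defs
  imports Main
begin

text \<open>Parallel edges are allowed (ends need not be injective).\<close>

definition multigraph :: "'v set \<Rightarrow> 'e set \<Rightarrow> ('e \<Rightarrow> 'v set) \<Rightarrow> bool" where
  "multigraph V E ends \<longleftrightarrow> finite V \<and> finite E \<and>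
     (\<forall>e\<in>E. ends e \<subseteq> V \<and> card (ends e) = 2)"

definition simple_graph :: "'v set \<Rightarrow> 'e set \<Rightarrow> ('e \<Rightarrow> 'v set) \<Rightarrow> bool" where
  "simple_graph V E ends \<longleftrightarrow> multigraph V E ends \<and> inj_on ends E"

definition inc_edges :: "'e set \<Rightarrow> ('e \<Rightarrow> 'v set) \<Rightarrow> 'v \<Rightarrow> 'e set" where
  "inc_edges E ends u = {e\<in>E. u \<in> ends e}"

definition regular :: "nat \<Rightarrow> 'v set \<Rightarrow> 'e set \<Rightarrow> ('e \<Rightarrow> 'v set) \<Rightarrow> bool" where
  "regular k V E ends \<longleftrightarrow> (\<forall>v\<in>V. card (inc_edges E ends v) = k)"

definition adj_rel :: "'e set \<Rightarrow> ('e \<Rightarrow> 'v set) \<Rightarrow> ('v \<times> 'v) set" where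
  "adj_rel E ends = {(x, y). \<exists>e\<in>E. ends e = {x, y}}"

definition connected_graph :: "'v set \<Rightarrow> 'e set \<Rightarrow> ('e \<Rightarrow> 'v set) \<Rightarrow> bool" where
  "connected_graph V E ends \<longleftrightarrow> (\<forall>x\<in>V. \<forall>y\<in>V. (x, y) \<in> (adj_rel E ends)\<^sup>*)"

definition edge_colorable :: "nat \<Rightarrow> 'e set \<Rightarrow> ('e \<Rightarrow> 'v set) \<Rightarrow> bool" where
  "edge_colorable k E ends \<longleftrightarrow> (\<exists>c :: 'e \<Rightarrow> nat. (\<forall>e\<in>E. c e < k) \<and>
     (\<forall>e1\<in>E. \<forall>e2\<in>E. e1 \<noteq> e2 \<and> ends e1 \<inter> ends e2 \<noteq> {} \<longrightarrow> c e1 \<noteq> c e2))"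

definition is_matching :: "('e \<Rightarrow> 'v set) \<Rightarrow> 'e set \<Rightarrow> bool" where
  "is_matching ends M \<longleftrightarrow> (\<forall>e1\<in>M. \<forall>e2\<in>M. e1 \<noteq> e2 \<longrightarrow> ends e1 \<inter> ends e2 = {})"

definition graph_hom ::
  "'v set \<Rightarrow> 'e set \<Rightarrow> ('e \<Rightarrow> 'v set) \<Rightarrow> 'w set \<Rightarrow> 'f set \<Rightarrow> ('f \<Rightarrow> 'w set)
   \<Rightarrow> ('v \<Rightarrow> 'w) \<Rightarrow> ('e \<Rightarrow> 'f) \<Rightarrow> bool" where
  "graph_hom VG EG endsG VH EH endsH fV fE \<longleftrightarrow>
     (\<forall>v\<in>VG. fV v \<in> VH) \<and> (\<forall>e\<in>EG. fE e \<in> EH) \<and>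
     (\<forall>e\<in>EG. endsH (fE e) = fV ` endsG e)"

definition covering_projection ::
  "'v set \<Rightarrow> 'e set \<Rightarrow> ('e \<Rightarrow> 'v set) \<Rightarrow> 'w set \<Rightarrow> 'f set \<Rightarrow> ('f \<Rightarrow> 'w set)
   \<Rightarrow> ('v \<Rightarrow> 'w) \<Rightarrow> ('e \<Rightarrow> 'f) \<Rightarrow> bool" where
  "covering_projection VG EG endsG VH EH endsH fV fE \<longleftrightarrow>
     graph_hom VG EG endsG VH EH endsH fV fE \<and>
     (\<forall>h\<in>EH. is_matching endsG {e\<in>EG. fE e = h} \<and>
        (\<forall>v\<in>VG. fV v \<in> endsH h \<longrightarrow> (\<exists>e\<in>EG. fE e = h \<and> v \<in> endsG e)))"

definition partial_covering_projection ::
  "'v set \<Rightarrow> 'e set \<Rightarrow> ('e \<Rightarrow> 'v set) \<Rightarrow> 'w set \<Rightarrow> 'f set \<Rightarrow> ('f \<Rightarrow> 'w set)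
   \<Rightarrow> ('v \<Rightarrow> 'w) \<Rightarrow> ('e \<Rightarrow> 'f) \<Rightarrow> bool" where
  "partial_covering_projection VG EG endsG VH EH endsH fV fE \<longleftrightarrow>
     graph_hom VG EG endsG VH EH endsH fV fE \<and>
     fV ` VG = VH \<and> fE ` EG = EH \<and>
     (\<forall>h\<in>EH. is_matching endsG {e\<in>EG. fE e = h})"

text \<open>G_u: split u into pendant vertices u_e (represented as Inr e); the other vertices are Inl v.
The edge set is unchanged.\<close>
definition split_V :: "'v set \<Rightarrow> 'e set \<Rightarrow> ('e \<Rightarrow> 'v set) \<Rightarrow> 'v \<Rightarrow> ('v + 'e) set" where
  "split_V V E ends u = Inl ` (V - {u}) \<union> Inr ` inc_edges E ends u"

definition split_ends :: "('e \<Rightarrow> 'v set) \<Rightarrow> 'v \<Rightarrow> 'e \<Rightarrow> ('v + 'e) set" where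
  "split_ends ends u e = (\<lambda>w. if w = u then Inr e else Inl w) ` ends e"

end

theory Submission
  imports Defs
begin

(*
  Part (a) composes a covering projection G \<rightarrow> H with the map G_u \<rightarrow> G merging the pendant
  vertices back into u.

  For (b) and (c) fix a proper k-edge-colouring of H. Its colour classes are perfect matchings,
  so card V(H) is even, and card V(H) divides card V(G) because G covers H. Along a partial
  covering f of G_u every inner vertex meets exactly one edge over colour class i, so by parity an
  odd number of pendant edges, hence exactly one, has colour i: the pendant edges have distinct
  images.

  Let d w = inner_count w be the number of vertices of G - u over w. The fibre of an edge h of H
  is counted at either end by d plus the pendant edges over h ending there, so d is constant along
  edges except that it rises by one across a pendant image, away from its pendant end. Thus a cut
  {d < l} is crossed by pendant images only and, by parity in each colour class, by all or none of
  them; connectivity of H puts all pendant ends at one level l0 and d into {l0, l0 + 1}. Finally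
  card V(G) - 1 = (\<Sum>w. d w) and the divisibility force d w = l0 at a single vertex w.
*)

section \<open>Matchings, edge colourings and parity\<close>

lemma inj_on_inc_edges_if_matching_fibres:
  assumes "graph_hom V' E' ends' VH EH endsH fV fE"
    and "\<forall>h\<in>EH. is_matching ends' {e\<in>E'. fE e = h}"
  shows "inj_on fE (inc_edges E' ends' z)"
  using assms unfolding inj_on_def inc_edges_def graph_hom_def is_matching_def by blast

lemma bij_betw_inc_edges_if_matching_fibres:
  assumes hom: "graph_hom V' E' ends' VH EH endsH fV fE"
    and mat: "\<forall>h\<in>EH. is_matching ends' {e\<in>E'. fE e = h}"
    and mgH: "multigraph VH EH endsH" and regH: "regular k VH EH endsH"
    and z: "z \<in> V'" and deg: "card (inc_edges E' ends' z) = k"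
  shows "bij_betw fE (inc_edges E' ends' z) (inc_edges EH endsH (fV z))"
proof -
  have inj: "inj_on fE (inc_edges E' ends' z)"
    using inj_on_inc_edges_if_matching_fibres[OF hom mat] .
  have sub: "fE ` inc_edges E' ends' z \<subseteq> inc_edges EH endsH (fV z)"
    using hom unfolding inc_edges_def graph_hom_def by auto
  have "finite (inc_edges EH endsH (fV z))"
    using mgH unfolding multigraph_def inc_edges_def by auto
  moreover have "card (inc_edges EH endsH (fV z)) = card (fE ` inc_edges E' ends' z)"
    using hom z regH deg card_image[OF inj] unfolding regular_def graph_hom_def by auto
  ultimately show ?thesis
    using inj sub card_subset_eq unfolding bij_betw_def by metis
qed

lemma ex1_inc_edge_of_colour:
  assumes mgH: "multigraph VH EH endsH" and regH: "regular k VH EH endsH"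
    and c_lt: "\<forall>h\<in>EH. c h < k"
    and c_proper: "\<forall>h1\<in>EH. \<forall>h2\<in>EH. h1 \<noteq> h2 \<and> endsH h1 \<inter> endsH h2 \<noteq> {} \<longrightarrow> c h1 \<noteq> c h2"
    and w: "w \<in> VH" and i: "i < k"
  shows "\<exists>!h. h \<in> inc_edges EH endsH w \<and> c h = i"
proof -
  let ?I = "inc_edges EH endsH w"
  have inj: "inj_on c ?I" using c_proper unfolding inj_on_def inc_edges_def by blast
  have "finite ?I" using mgH unfolding multigraph_def inc_edges_def by auto
  moreover have "c ` ?I \<subseteq> {..<k}" using c_lt unfolding inc_edges_def by auto
  moreover have "card (c ` ?I) = card {..<k}"
    using card_image[OF inj] regH w unfolding regular_def by auto
  ultimately have "c ` ?I = {..<k}" by (simp add: card_subset_eq)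
  then show ?thesis using i inj unfolding inj_on_def by (metis imageE lessThan_iff)
qed

lemma card_bij_betw_filter_eq_1:
  assumes f: "bij_betw f A B" and Q: "\<exists>!b. b \<in> B \<and> Q b"
  shows "card {a\<in>A. Q (f a)} = 1"
proof -
  have "f ` {a\<in>A. Q (f a)} = {b\<in>B. Q b}" using f unfolding bij_betw_def by auto
  moreover have "inj_on f {a\<in>A. Q (f a)}" using bij_betw_imp_inj_on[OF f] by (rule inj_on_subset) auto
  moreover obtain b where "{b\<in>B. Q b} = {b}" using Q by blast
  ultimately show ?thesis by (metis card_image is_singletonI is_singleton_altdef)
qed

lemma sum_card_incident:
  assumes "finite A" "finite F"
  shows "(\<Sum>z\<in>A. card {e\<in>F. z \<in> ends e}) = (\<Sum>e\<in>F. card (A \<inter> ends e))"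
  by (rule sum_multicount_gen[OF assms]) (simp add: Int_def)

text \<open>The fibre of an edge h is a matching each of whose edges has exactly one end over a given
  end a of h, so it is counted by the vertices over a that it covers.\<close>
lemma card_edge_fibre:
  assumes hom: "graph_hom V' E' ends' VH EH endsH fV fE"
    and mat: "\<forall>h\<in>EH. is_matching ends' {e\<in>E'. fE e = h}"
    and mgH: "multigraph VH EH endsH"
    and ends': "\<forall>e\<in>E'. ends' e \<subseteq> V' \<and> card (ends' e) = 2"
    and fin: "finite V'" "finite E'" and h: "h \<in> EH" and a: "a \<in> endsH h"
  shows "card {e\<in>E'. fE e = h} = card {z\<in>V'. fV z = a \<and> (\<exists>e\<in>E'. fE e = h \<and> z \<in> ends' e)}"
proof -
  let ?X = "{e\<in>E'. fE e = h}" and ?A = "{z\<in>V'. fV z = a}"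
  have "card (?A \<inter> ends' e) = 1" if e: "e \<in> ?X" for e
  proof -
    obtain p q where pq: "ends' e = {p, q}" "p \<noteq> q" "p \<in> V'" "q \<in> V'"
      using ends' e by (metis (no_types, lifting) card_2_iff insert_subset mem_Collect_eq)
    have "endsH h = {fV p, fV q}" using hom e pq unfolding graph_hom_def by auto
    moreover have "card (endsH h) = 2" using mgH h unfolding multigraph_def by auto
    ultimately have "fV p \<noteq> fV q" by auto
    moreover have "a = fV p \<or> a = fV q" using a \<open>endsH h = {fV p, fV q}\<close> by auto
    ultimately have "?A \<inter> ends' e = {p} \<or> ?A \<inter> ends' e = {q}" using pq by auto
    then show ?thesis by auto
  qed
  then have "(\<Sum>e\<in>?X. card (?A \<inter> ends' e)) = card ?X" by simp
  moreover have "card {e\<in>?X. z \<in> ends' e} = (if \<exists>e\<in>E'. fE e = h \<and> z \<in> ends' e then 1 else 0)"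
    for z
  proof (cases "\<exists>e\<in>E'. fE e = h \<and> z \<in> ends' e")
    case True
    then obtain e0 where e0: "e0 \<in> ?X" "z \<in> ends' e0" by blast
    have "{e\<in>?X. z \<in> ends' e} = {e0}"
      using e0 mat h unfolding is_matching_def by blast
    then show ?thesis using True by simp
  next
    case False
    then have "{e\<in>?X. z \<in> ends' e} = {}" by auto
    then show ?thesis using False by (simp only: card.empty if_False)
  qed
  then have "(\<Sum>z\<in>?A. card {e\<in>?X. z \<in> ends' e})
      = card {z\<in>?A. \<exists>e\<in>E'. fE e = h \<and> z \<in> ends' e}"
    using fin by (simp add: sum.If_cases Int_def)
  ultimately show ?thesis
    using sum_card_incident[of ?A ?X ends'] fin by simp
qed

lemma card_Int_eq_1_iff_crossing:
  assumes "card A = 2"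
  shows "card (T \<inter> A) = 1 \<longleftrightarrow> (\<exists>a\<in>A. \<exists>b\<in>A. a \<in> T \<and> b \<notin> T)"
proof -
  obtain p q where "A = {p, q}" "p \<noteq> q" using assms by (meson card_2_iff)
  then show ?thesis by (cases "p \<in> T"; cases "q \<in> T") (auto simp: Int_insert_right)
qed

lemma odd_card_iff_odd_crossing_colour_class:
  assumes mgH: "multigraph VH EH endsH" and regH: "regular k VH EH endsH"
    and c_lt: "\<forall>h\<in>EH. c h < k"
    and c_proper: "\<forall>h1\<in>EH. \<forall>h2\<in>EH. h1 \<noteq> h2 \<and> endsH h1 \<inter> endsH h2 \<noteq> {} \<longrightarrow> c h1 \<noteq> c h2"
    and T: "T \<subseteq> VH" and i: "i < k"
  shows "odd (card T) \<longleftrightarrow> odd (card {h\<in>EH. c h = i \<and> card (T \<inter> endsH h) = 1})"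
proof -
  let ?M = "{h\<in>EH. c h = i}" and ?t = "\<lambda>h. card (T \<inter> endsH h)"
  have finH: "finite VH" "finite EH" using mgH unfolding multigraph_def by auto
  then have finT: "finite T" using T finite_subset by blast
  have "card {h\<in>?M. w \<in> endsH h} = 1" if "w \<in> T" for w
  proof -
    have "w \<in> VH" using T that by blast
    from ex1_inc_edge_of_colour[OF mgH regH c_lt c_proper this i]
    obtain h1 where "h1 \<in> inc_edges EH endsH w \<and> c h1 = i"
      and "\<forall>h. h \<in> inc_edges EH endsH w \<and> c h = i \<longrightarrow> h = h1"
      by (rule ex1E)
    then have "{h\<in>?M. w \<in> endsH h} = {h1}" unfolding inc_edges_def by blast
    then show ?thesis by simp
  qed
  then have "card T = (\<Sum>h\<in>?M. ?t h)"
    using sum_card_incident[of T ?M endsH] finT finH by simp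
  also have "\<dots> = (\<Sum>h\<in>?M. if ?t h = 1 then 1 else 0) + (\<Sum>h\<in>?M. if ?t h = 1 then 0 else ?t h)"
    unfolding sum.distrib[symmetric] by (rule sum.cong) auto
  also have "(\<Sum>h\<in>?M. if ?t h = 1 then 1 else 0) = card {h\<in>?M. ?t h = 1}"
    using finH by (simp add: sum.If_cases Int_def)
  finally have "card T = card {h\<in>?M. ?t h = 1} + (\<Sum>h\<in>?M. if ?t h = 1 then 0 else ?t h)" .
  moreover have "even (\<Sum>h\<in>?M. if ?t h = 1 then 0 else ?t h)"
  proof (rule dvd_sum)
    fix h assume "h \<in> ?M"
    then have "endsH h \<subseteq> VH" "card (endsH h) = 2" using mgH unfolding multigraph_def by auto
    then have "?t h \<le> 2" using card_mono[OF finite_subset[OF _ finH(1)] Int_lower2] by metis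
    then show "even (if ?t h = 1 then 0 else ?t h)"
      by (cases "?t h") (auto simp: le_Suc_eq)
  qed
  ultimately show ?thesis by simp
qed

lemma even_card_vertices_if_edge_colourable:
  assumes k: "k \<ge> 1" and mgH: "multigraph VH EH endsH" and regH: "regular k VH EH endsH"
    and c_lt: "\<forall>h\<in>EH. c h < k"
    and c_proper: "\<forall>h1\<in>EH. \<forall>h2\<in>EH. h1 \<noteq> h2 \<and> endsH h1 \<inter> endsH h2 \<noteq> {} \<longrightarrow> c h1 \<noteq> c h2"
  shows "even (card VH)"
proof -
  have no_crossing: "{h\<in>EH. c h = 0 \<and> card (VH \<inter> endsH h) = 1} = {}"
    using mgH unfolding multigraph_def by (auto simp: Int_absorb1)
  have "odd (card VH) \<longleftrightarrow> odd (card {h\<in>EH. c h = 0 \<and> card (VH \<inter> endsH h) = 1})"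
    using k by (intro odd_card_iff_odd_crossing_colour_class[OF mgH regH c_lt c_proper subset_refl]) simp
  then show ?thesis unfolding no_crossing by simp
qed

section \<open>Connectivity and coverings\<close>

lemma connected_graph_const:
  assumes conn: "connected_graph V E ends"
    and edge: "\<And>h x y. h \<in> E \<Longrightarrow> ends h = {x, y} \<Longrightarrow> \<phi> x = \<phi> y"
    and xy: "x \<in> V" "y \<in> V"
  shows "\<phi> x = \<phi> y"
proof -
  have "(x, y) \<in> (adj_rel E ends)\<^sup>*" using conn xy unfolding connected_graph_def by auto
  then show ?thesis
    by (induction rule: rtrancl_induct) (auto simp: adj_rel_def dest: edge)
qed

lemma connected_graph_crossing_edge:
  assumes conn: "connected_graph V E ends" and "a \<in> V" "a \<in> T" "b \<in> V" "b \<notin> T"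
  shows "\<exists>h\<in>E. \<exists>a'\<in>ends h. \<exists>b'\<in>ends h. a' \<in> T \<and> b' \<notin> T"
proof (rule ccontr)
  assume "\<not> ?thesis"
  then have "(a \<in> T) = (b \<in> T)"
    by (intro connected_graph_const[OF conn _ \<open>a \<in> V\<close> \<open>b \<in> V\<close>]) auto
  with assms show False by simp
qed

lemma covering_projection_surj_vertices:
  assumes connH: "connected_graph VH EH endsH" and mgG: "multigraph VG EG endsG"
    and cov: "covering_projection VG EG endsG VH EH endsH fV fE" and v: "v \<in> VG"
  shows "fV ` VG = VH"
proof
  show into: "fV ` VG \<subseteq> VH" using cov unfolding covering_projection_def graph_hom_def by auto
  have "endsH h \<subseteq> fV ` VG" if h: "h \<in> EH" and w: "w \<in> endsH h" "w \<in> fV ` VG" for h w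
  proof -
    obtain v' where "v' \<in> VG" "fV v' = w" using w(2) by blast
    then obtain e where "e \<in> EG" "fE e = h" "v' \<in> endsG e"
      using cov h w(1) unfolding covering_projection_def by blast
    moreover have "endsG e \<subseteq> VG" using mgG \<open>e \<in> EG\<close> unfolding multigraph_def by blast
    ultimately show ?thesis
      using cov unfolding covering_projection_def graph_hom_def by (metis image_mono)
  qed
  then have edge: "(x \<in> fV ` VG) = (y \<in> fV ` VG)" if "h \<in> EH" "endsH h = {x, y}" for h x y
    using that by blast
  have "fV v \<in> VH" using into v by blast
  show "VH \<subseteq> fV ` VG"
  proof
    fix w assume "w \<in> VH"
    then have "(w \<in> fV ` VG) = (fV v \<in> fV ` VG)"
      using connected_graph_const[where \<phi>="\<lambda>w. w \<in> fV ` VG", OF connH] edge \<open>fV v \<in> VH\<close>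
      by blast
    then show "w \<in> fV ` VG" using v by simp
  qed
qed

lemma covering_projection_card_fibres_eq:
  assumes mgH: "multigraph VH EH endsH" and connH: "connected_graph VH EH endsH"
    and mgG: "multigraph VG EG endsG"
    and cov: "covering_projection VG EG endsG VH EH endsH fV fE"
    and w: "w \<in> VH" "w' \<in> VH"
  shows "card {v\<in>VG. fV v = w} = card {v\<in>VG. fV v = w'}"
proof -
  have hom: "graph_hom VG EG endsG VH EH endsH fV fE"
    and mat: "\<forall>h\<in>EH. is_matching endsG {e\<in>EG. fE e = h}"
    and lift: "\<forall>h\<in>EH. \<forall>v\<in>VG. fV v \<in> endsH h \<longrightarrow> (\<exists>e\<in>EG. fE e = h \<and> v \<in> endsG e)"
    using cov unfolding covering_projection_def by auto
  have ends: "\<forall>e\<in>EG. endsG e \<subseteq> VG \<and> card (endsG e) = 2" and fin: "finite VG" "finite EG"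
    using mgG unfolding multigraph_def by auto
  have fibre: "card {e\<in>EG. fE e = h} = card {v\<in>VG. fV v = a}" if "h \<in> EH" "a \<in> endsH h" for h a
  proof -
    have "{v\<in>VG. fV v = a \<and> (\<exists>e\<in>EG. fE e = h \<and> v \<in> endsG e)} = {v\<in>VG. fV v = a}"
      using lift that by auto
    then show ?thesis using card_edge_fibre[OF hom mat mgH ends fin that] by simp
  qed
  have "card {v\<in>VG. fV v = x} = card {v\<in>VG. fV v = y}" if "h \<in> EH" "endsH h = {x, y}" for h x y
    using fibre[of h x] fibre[of h y] that by simp
  then show ?thesis by (rule connected_graph_const[OF connH _ w])
qed

lemma card_dvd_card_covering:
  assumes mgH: "multigraph VH EH endsH" and connH: "connected_graph VH EH endsH"
    and mgG: "multigraph VG EG endsG"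
    and cov: "covering_projection VG EG endsG VH EH endsH fV fE" and v: "v \<in> VG"
  shows "card VH dvd card VG"
proof -
  have fin: "finite VG" "finite VH" using mgG mgH unfolding multigraph_def by auto
  have "fV v \<in> VH" using cov v unfolding covering_projection_def graph_hom_def by auto
  have "card {w\<in>VH. fV v' = w} = 1" if "v' \<in> VG" for v'
  proof -
    have "{w\<in>VH. fV v' = w} = {fV v'}"
      using cov that unfolding covering_projection_def graph_hom_def by auto
    then show ?thesis by simp
  qed
  then have "card VG = (\<Sum>w\<in>VH. card {v\<in>VG. fV v = w})"
    using sum_multicount[OF fin(2,1), of "\<lambda>w v. fV v = w" 1] by simp
  also have "\<dots> = (\<Sum>w\<in>VH. card {v'\<in>VG. fV v' = fV v})"
    using covering_projection_card_fibres_eq[OF mgH connH mgG cov _ \<open>fV v \<in> VH\<close>] by simp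
  finally show ?thesis by simp
qed

lemma card_dvd_card_if_lifts:
  assumes mgH: "multigraph VH EH endsH" and connH: "connected_graph VH EH endsH"
    and regH: "regular k VH EH endsH"
    and mgG: "multigraph VG EG endsG" and regG: "regular k VG EG endsG" and u: "u \<in> VG"
    and x: "x \<in> VH"
    and lift: "\<forall>x\<in>VH. \<forall>\<sigma>. bij_betw \<sigma> (inc_edges EG endsG u) (inc_edges EH endsH x) \<longrightarrow>
           (\<exists>fV fE. covering_projection VG EG endsG VH EH endsH fV fE \<and> fV u = x \<and>
              (\<forall>e\<in>inc_edges EG endsG u. fE e = \<sigma> e))"
  shows "card VH dvd card VG"
proof -
  have "finite (inc_edges EG endsG u)" "finite (inc_edges EH endsH x)"
    using mgG mgH unfolding multigraph_def inc_edges_def by auto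
  moreover have "card (inc_edges EG endsG u) = card (inc_edges EH endsH x)"
    using regG regH u x unfolding regular_def by simp
  ultimately obtain \<sigma> where "bij_betw \<sigma> (inc_edges EG endsG u) (inc_edges EH endsH x)"
    using finite_same_card_bij by blast
  then obtain fV fE where "covering_projection VG EG endsG VH EH endsH fV fE"
    using lift x by blast
  then show ?thesis using card_dvd_card_covering[OF mgH connH mgG _ u] by blast
qed

section \<open>Splitting a vertex into pendant vertices\<close>

lemma Inl_mem_split_ends: "Inl v \<in> split_ends ends u e \<longleftrightarrow> v \<in> ends e \<and> v \<noteq> u"
  unfolding split_ends_def by auto

lemma Inr_mem_split_ends: "Inr e' \<in> split_ends ends u e \<longleftrightarrow> e' = e \<and> u \<in> ends e"
  unfolding split_ends_def by (auto split: if_splits)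

lemma inc_edges_split_Inl:
  "v \<noteq> u \<Longrightarrow> inc_edges E (split_ends ends u) (Inl v) = inc_edges E ends v"
  unfolding inc_edges_def by (simp add: Inl_mem_split_ends)

lemma multigraph_split:
  assumes "multigraph V E ends"
  shows "multigraph (split_V V E ends u) E (split_ends ends u)"
proof -
  have "card (split_ends ends u e) = card (ends e)" for e
    unfolding split_ends_def by (rule card_image) (auto simp: inj_on_def)
  then show ?thesis
    using assms unfolding multigraph_def split_V_def split_ends_def inc_edges_def by auto
qed

lemma image_merge_split_ends: "case_sum id (\<lambda>_. u) ` split_ends ends u e = ends e"
  unfolding split_ends_def image_image by (auto simp: image_iff)

lemma image_merge_split_V:
  assumes "u \<in> V" "inc_edges E ends u \<noteq> {}"
  shows "case_sum id (\<lambda>_. u) ` split_V V E ends u = V"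
  using assms unfolding split_V_def by (auto simp: image_Un image_image)

lemma partial_covering_projection_split:
  assumes connH: "connected_graph VH EH endsH" and mgH: "multigraph VH EH endsH"
    and mgG: "multigraph VG EG endsG" and u: "u \<in> VG" "inc_edges EG endsG u \<noteq> {}"
    and cov: "covering_projection VG EG endsG VH EH endsH fV fE"
  shows "partial_covering_projection (split_V VG EG endsG u) EG (split_ends endsG u) VH EH endsH
           (fV \<circ> case_sum id (\<lambda>_. u)) fE"
proof -
  let ?merge = "case_sum id (\<lambda>_. u)"
  have hom: "graph_hom VG EG endsG VH EH endsH fV fE"
    and mat: "\<forall>h\<in>EH. is_matching endsG {e\<in>EG. fE e = h}"
    and lift: "\<forall>h\<in>EH. \<forall>v\<in>VG. fV v \<in> endsH h \<longrightarrow> (\<exists>e\<in>EG. fE e = h \<and> v \<in> endsG e)"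
    using cov unfolding covering_projection_def by auto
  have surjV: "fV ` VG = VH" using covering_projection_surj_vertices[OF connH mgG cov u(1)] .
  have merge_V: "?merge ` split_V VG EG endsG u = VG" using image_merge_split_V[OF u] .
  have "graph_hom (split_V VG EG endsG u) EG (split_ends endsG u) VH EH endsH (fV \<circ> ?merge) fE"
    using hom merge_V unfolding graph_hom_def image_comp[symmetric] image_merge_split_ends by auto
  moreover have "(fV \<circ> ?merge) ` split_V VG EG endsG u = VH"
    by (simp only: image_comp[symmetric] merge_V surjV)
  moreover have "fE ` EG = EH"
  proof
    show "fE ` EG \<subseteq> EH" using hom unfolding graph_hom_def by auto
    show "EH \<subseteq> fE ` EG"
    proof
      fix h assume h: "h \<in> EH"
      then have "endsH h \<noteq> {}" "endsH h \<subseteq> VH" using mgH unfolding multigraph_def by auto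
      then obtain v where "v \<in> VG" "fV v \<in> endsH h" using surjV by blast
      then show "h \<in> fE ` EG" using lift h by blast
    qed
  qed
  moreover have "is_matching (split_ends endsG u) {e\<in>EG. fE e = h}" if "h \<in> EH" for h
  proof -
    have "split_ends endsG u e1 \<inter> split_ends endsG u e2 = {}" if "endsG e1 \<inter> endsG e2 = {}"
      for e1 e2
      using that image_merge_split_ends[of u endsG e1] image_merge_split_ends[of u endsG e2] by blast
    then show ?thesis using mat that unfolding is_matching_def by blast
  qed
  ultimately show ?thesis unfolding partial_covering_projection_def by blast
qed

section \<open>Partial coverings of the split graph\<close>

lemma remainder_eq_pred_if_mult_eq:
  fixes m l n d :: nat
  assumes eq: "m * n = l * n + d + 1" and d: "d < n"
  shows "d + 1 = n"
proof -
  have "l * n < m * n" using eq by linarith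
  then have "l < m" by simp
  moreover have "m * n \<le> (l + 1) * n" using eq d by simp
  then have "m \<le> l + 1" using mult_le_cancel2[THEN iffD1] d by blast
  ultimately have "m = l + 1" by simp
  then show ?thesis using eq by simp
qed

locale split_partial_cover =
  fixes k :: nat and VH :: "'w set" and EH :: "'f set" and endsH :: "'f \<Rightarrow> 'w set"
    and c :: "'f \<Rightarrow> nat"
    and VG :: "'v set" and EG :: "'e set" and endsG :: "'e \<Rightarrow> 'v set" and u :: 'v
    and fV :: "'v + 'e \<Rightarrow> 'w" and fE :: "'e \<Rightarrow> 'f"
  assumes k_pos: "k \<ge> 1"
    and mgH: "multigraph VH EH endsH" and connH: "connected_graph VH EH endsH"
    and regH: "regular k VH EH endsH"
    and c_lt: "\<forall>h\<in>EH. c h < k"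
    and c_proper: "\<forall>h1\<in>EH. \<forall>h2\<in>EH. h1 \<noteq> h2 \<and> endsH h1 \<inter> endsH h2 \<noteq> {} \<longrightarrow> c h1 \<noteq> c h2"
    and mgG: "multigraph VG EG endsG" and regG: "regular k VG EG endsG" and u: "u \<in> VG"
    and card_dvd: "card VH dvd card VG"
    and pcov: "partial_covering_projection (split_V VG EG endsG u) EG (split_ends endsG u)
                 VH EH endsH fV fE"
begin

abbreviation "P \<equiv> inc_edges EG endsG u"
abbreviation "Vu \<equiv> split_V VG EG endsG u"
abbreviation "endsu \<equiv> split_ends endsG u"

lemma hom: "graph_hom Vu EG endsu VH EH endsH fV fE"
  and matching: "\<forall>h\<in>EH. is_matching endsu {e\<in>EG. fE e = h}"
  using pcov unfolding partial_covering_projection_def by auto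

lemma fE_in: "e \<in> EG \<Longrightarrow> fE e \<in> EH"
  and fV_in: "z \<in> Vu \<Longrightarrow> fV z \<in> VH"
  and ends_fE: "e \<in> EG \<Longrightarrow> endsH (fE e) = fV ` endsu e"
  using hom unfolding graph_hom_def by auto

lemma finite_VG: "finite VG" and finite_EG: "finite EG" and finite_VH: "finite VH"
  using mgG mgH unfolding multigraph_def by auto

lemma ends_EH: "h \<in> EH \<Longrightarrow> endsH h \<subseteq> VH \<and> card (endsH h) = 2"
  using mgH unfolding multigraph_def by auto

lemma finite_P: "finite P" and card_P: "card P = k"
  using finite_EG regG u unfolding inc_edges_def regular_def by auto

lemma pendantD: "e \<in> P \<Longrightarrow> e \<in> EG \<and> u \<in> endsG e"
  unfolding inc_edges_def by auto

lemma Inl_in_Vu: "v \<in> VG \<Longrightarrow> v \<noteq> u \<Longrightarrow> Inl v \<in> Vu"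
  and Inr_in_Vu: "e \<in> P \<Longrightarrow> Inr e \<in> Vu"
  unfolding split_V_def by auto

lemma pendant_end_in_ends: "e \<in> P \<Longrightarrow> fV (Inr e) \<in> endsH (fE e)"
  using ends_fE pendantD by (auto simp: Inr_mem_split_ends)

lemma bij_betw_inc_edges_inner:
  assumes "v \<in> VG" "v \<noteq> u"
  shows "bij_betw fE (inc_edges EG endsG v) (inc_edges EH endsH (fV (Inl v)))"
  using bij_betw_inc_edges_if_matching_fibres[OF hom matching mgH regH Inl_in_Vu[OF assms]]
    regG assms unfolding regular_def inc_edges_split_Inl[OF assms(2)] by simp

text \<open>Handshake count of colour class i pulled back to G_u: every inner vertex meets exactly one
  of its edges, a pendant vertex meets it iff its pendant edge has colour i.\<close>
lemma card_colour_class_split: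
  assumes i: "i < k"
  shows "2 * card {e\<in>EG. c (fE e) = i} = (card VG - 1) + card {e\<in>P. c (fE e) = i}"
proof -
  let ?X = "{e\<in>EG. c (fE e) = i}"
  let ?deg = "\<lambda>z. card {e\<in>?X. z \<in> endsu e}"
  have mgGu: "multigraph Vu EG endsu" using multigraph_split[OF mgG] .
  then have "(\<Sum>e\<in>?X. card (Vu \<inter> endsu e)) = 2 * card ?X"
    unfolding multigraph_def by (simp add: Int_absorb1)
  then have "2 * card ?X = (\<Sum>z\<in>Vu. ?deg z)"
    using sum_card_incident[of Vu ?X endsu] mgGu finite_EG unfolding multigraph_def by simp
  also have "\<dots> = (\<Sum>z\<in>Inl ` (VG - {u}). ?deg z) + (\<Sum>z\<in>Inr ` P. ?deg z)"
    unfolding split_V_def using finite_VG finite_P by (intro sum.union_disjoint) auto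
  also have "(\<Sum>z\<in>Inl ` (VG - {u}). ?deg z) = (\<Sum>v\<in>VG - {u}. ?deg (Inl v))"
    by (simp add: sum.reindex)
  also have "\<dots> = (\<Sum>v\<in>VG - {u}. 1)"
  proof (rule sum.cong[OF refl])
    fix v assume v: "v \<in> VG - {u}"
    have "{e\<in>?X. Inl v \<in> endsu e} = {e\<in>inc_edges EG endsG v. c (fE e) = i}"
      using v unfolding inc_edges_def by (auto simp: Inl_mem_split_ends)
    moreover have "fV (Inl v) \<in> VH" using v by (simp add: Inl_in_Vu fV_in)
    then have "card {e\<in>inc_edges EG endsG v. c (fE e) = i} = 1"
      using v by (intro card_bij_betw_filter_eq_1[OF bij_betw_inc_edges_inner]
          ex1_inc_edge_of_colour[OF mgH regH c_lt c_proper _ i]) auto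
    ultimately show "?deg (Inl v) = 1" by simp
  qed
  also have "(\<Sum>z\<in>Inr ` P. ?deg z) = card {e\<in>P. c (fE e) = i}"
  proof -
    have "?deg (Inr e') = (if c (fE e') = i then 1 else 0)" if "e' \<in> P" for e'
    proof -
      have "{e\<in>?X. Inr e' \<in> endsu e} = (if c (fE e') = i then {e'} else {})"
        using that pendantD[OF that] by (auto simp: Inr_mem_split_ends)
      then show ?thesis by simp
    qed
    then show ?thesis using finite_P by (simp add: sum.reindex sum.If_cases Int_def)
  qed
  finally show ?thesis using u finite_VG by simp
qed

lemma even_card_VG: "even (card VG)"
  using even_card_vertices_if_edge_colourable[OF k_pos mgH regH c_lt c_proper] card_dvd
  by (rule dvd_trans)

lemma bij_betw_pendant_colours: "bij_betw (\<lambda>e. c (fE e)) P {..<k}"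
proof -
  have "i \<in> (\<lambda>e. c (fE e)) ` P" if i: "i < k" for i
  proof -
    have "card VG \<ge> 1" using u finite_VG by (auto simp: Suc_le_eq card_gt_0_iff)
    moreover have "\<And>n a p :: nat. even n \<Longrightarrow> 1 \<le> n \<Longrightarrow> 2 * a = n - 1 + p \<Longrightarrow> odd p"
      by presburger
    ultimately have "odd (card {e\<in>P. c (fE e) = i})"
      using card_colour_class_split[OF i] even_card_VG by blast
    then have "{e\<in>P. c (fE e) = i} \<noteq> {}" by (metis card.empty even_zero)
    then show ?thesis by auto
  qed
  moreover have "(\<lambda>e. c (fE e)) ` P \<subseteq> {..<k}" using c_lt fE_in pendantD by auto
  ultimately have "(\<lambda>e. c (fE e)) ` P = {..<k}" by auto
  moreover have "inj_on (\<lambda>e. c (fE e)) P"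
    using calculation finite_P card_P by (simp add: eq_card_imp_inj_on)
  ultimately show ?thesis unfolding bij_betw_def by simp
qed

lemma inj_on_pendant_colours: "inj_on (\<lambda>e. c (fE e)) P"
  using bij_betw_pendant_colours unfolding bij_betw_def by simp

lemma inj_on_pendant_edges: "inj_on fE P"
  using inj_on_pendant_colours unfolding inj_on_def by auto

abbreviation inner_count :: "'w \<Rightarrow> nat" where
  "inner_count w \<equiv> card {v\<in>VG - {u}. fV (Inl v) = w}"

abbreviation pendant_count :: "'w \<Rightarrow> 'f \<Rightarrow> nat" where
  "pendant_count a h \<equiv> card {e\<in>P. fE e = h \<and> fV (Inr e) = a}"

lemma card_edge_fibre_split:
  assumes h: "h \<in> EH" and a: "a \<in> endsH h"
  shows "card {e\<in>EG. fE e = h} = inner_count a + pendant_count a h"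
proof -
  let ?A = "{v\<in>VG - {u}. fV (Inl v) = a}" and ?Q = "{e\<in>P. fE e = h \<and> fV (Inr e) = a}"
  have mgGu: "multigraph Vu EG endsu" using multigraph_split[OF mgG] .
  have "{z\<in>Vu. fV z = a \<and> (\<exists>e\<in>EG. fE e = h \<and> z \<in> endsu e)} = Inl ` ?A \<union> Inr ` ?Q"
  proof (intro equalityI subsetI)
    fix z assume "z \<in> {z\<in>Vu. fV z = a \<and> (\<exists>e\<in>EG. fE e = h \<and> z \<in> endsu e)}"
    then show "z \<in> Inl ` ?A \<union> Inr ` ?Q"
      unfolding split_V_def by (auto simp: Inr_mem_split_ends)
  next
    fix z assume z: "z \<in> Inl ` ?A \<union> Inr ` ?Q"
    show "z \<in> {z\<in>Vu. fV z = a \<and> (\<exists>e\<in>EG. fE e = h \<and> z \<in> endsu e)}"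
    proof (cases z)
      case (Inl v)
      then have v: "v \<in> VG" "v \<noteq> u" "fV (Inl v) = a" using z by auto
      then have "h \<in> inc_edges EH endsH (fV (Inl v))" using h a unfolding inc_edges_def by simp
      then obtain e where "e \<in> inc_edges EG endsG v" "fE e = h"
        using bij_betw_inc_edges_inner[OF v(1,2)] by (metis bij_betw_imp_surj_on imageE)
      then show ?thesis
        using v Inl Inl_in_Vu[OF v(1,2)] unfolding inc_edges_def by (auto simp: Inl_mem_split_ends)
    next
      case (Inr e)
      then show ?thesis using z Inr_in_Vu pendantD by (auto simp: Inr_mem_split_ends)
    qed
  qed
  moreover have "card (Inl ` ?A \<union> Inr ` ?Q :: ('v + 'e) set) = card ?A + card ?Q"
    using finite_VG finite_P by (subst card_Un_disjoint) (auto simp: card_image)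
  ultimately show ?thesis
    using card_edge_fibre[OF hom matching mgH _ _ finite_EG h a] mgGu
    unfolding multigraph_def by simp
qed

lemma pendant_count_add_le_1:
  assumes "a \<noteq> b"
  shows "pendant_count a h + pendant_count b h \<le> 1"
proof -
  have "pendant_count a h + pendant_count b h
      = card ({e\<in>P. fE e = h \<and> fV (Inr e) = a} \<union> {e\<in>P. fE e = h \<and> fV (Inr e) = b})"
    using assms finite_P by (subst card_Un_disjoint) auto
  also have "\<dots> \<le> card {e\<in>P. fE e = h}" using finite_P by (intro card_mono) auto
  also have "\<dots> \<le> Suc 0"
    using inj_on_pendant_edges finite_P by (subst card_le_Suc0_iff_eq) (auto simp: inj_on_def)
  finally show ?thesis by simp
qed

lemma inner_count_other_end:
  assumes e: "e \<in> P" and b: "b \<in> endsH (fE e)" "b \<noteq> fV (Inr e)"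
  shows "inner_count b = inner_count (fV (Inr e)) + 1"
proof -
  let ?a = "fV (Inr e)" and ?h = "fE e"
  have h: "?h \<in> EH" using fE_in pendantD e by blast
  have "pendant_count ?a ?h \<noteq> 0" using e finite_P by auto
  moreover have "inner_count ?a + pendant_count ?a ?h = inner_count b + pendant_count b ?h"
    using card_edge_fibre_split[OF h pendant_end_in_ends[OF e]] card_edge_fibre_split[OF h b(1)]
    by simp
  moreover have "pendant_count ?a ?h + pendant_count b ?h \<le> 1"
    using pendant_count_add_le_1 b(2) by auto
  ultimately show ?thesis by linarith
qed

lemma crossing_edge_is_pendant:
  assumes h: "h \<in> EH" and ab: "a \<in> endsH h" "b \<in> endsH h"
    and l: "inner_count a < l" "l \<le> inner_count b"
  shows "\<exists>e\<in>P. fE e = h \<and> inner_count (fV (Inr e)) + 1 = l"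
proof -
  have "a \<noteq> b" using l by auto
  then have "pendant_count a h + pendant_count b h \<le> 1" by (rule pendant_count_add_le_1)
  moreover have "inner_count a + pendant_count a h = inner_count b + pendant_count b h"
    using card_edge_fibre_split[OF h ab(1)] card_edge_fibre_split[OF h ab(2)] by simp
  ultimately have "pendant_count a h = 1" "inner_count a + 1 = l" using l by linarith+
  moreover have "{e\<in>P. fE e = h \<and> fV (Inr e) = a} \<noteq> {}"
    using \<open>pendant_count a h = 1\<close> by (intro notI) simp
  ultimately show ?thesis by blast
qed

text \<open>Only pendant edges can cross the cut below level l, and colour i is carried by a single
  pendant edge, so by parity all pendant edges cross the cut or none does; connectivity of H forces
  the former.\<close>
lemma pendants_at_level_cut:
  assumes a: "a \<in> VH" "inner_count a < l" and b: "b \<in> VH" "l \<le> inner_count b" and e: "e \<in> P"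
  shows "inner_count (fV (Inr e)) + 1 = l"
proof -
  define T where "T = {w\<in>VH. inner_count w < l}"
  have crossing_pendant: "\<exists>e'\<in>P. fE e' = h \<and> inner_count (fV (Inr e')) + 1 = l"
    if h: "h \<in> EH" "card (T \<inter> endsH h) = 1" for h
  proof -
    obtain a' b' where a'b': "a' \<in> endsH h" "b' \<in> endsH h" "a' \<in> T" "b' \<notin> T"
      using card_Int_eq_1_iff_crossing[of "endsH h" T] ends_EH[OF h(1)] h(2) by blast
    then have "inner_count a' < l" "l \<le> inner_count b'"
      using ends_EH[OF h(1)] unfolding T_def by auto
    then show ?thesis using crossing_edge_is_pendant[OF h(1) a'b'(1,2)] by blast
  qed
  have crossing_iff_odd: "card (T \<inter> endsH (fE e')) = 1 \<longleftrightarrow> odd (card T)" if e': "e' \<in> P" for e'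
  proof -
    let ?i = "c (fE e')"
    have "?i < k" "fE e' \<in> EH" using c_lt fE_in pendantD e' by blast+
    have "h = fE e'" if h: "h \<in> EH" "c h = ?i" "card (T \<inter> endsH h) = 1" for h
    proof -
      obtain e'' where "e'' \<in> P" "fE e'' = h" using crossing_pendant h(1,3) by blast
      then show ?thesis using inj_onD[OF inj_on_pendant_colours _ _ e'] h(2) by metis
    qed
    then have "{h\<in>EH. c h = ?i \<and> card (T \<inter> endsH h) = 1}
        = (if card (T \<inter> endsH (fE e')) = 1 then {fE e'} else {})"
      using \<open>fE e' \<in> EH\<close> by auto
    then show ?thesis
      using odd_card_iff_odd_crossing_colour_class[OF mgH regH c_lt c_proper _ \<open>?i < k\<close>, of T]
      unfolding T_def by simp
  qed
  have "a \<in> T" "b \<notin> T" using a b unfolding T_def by auto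
  then obtain h a' b' where "h \<in> EH" "a' \<in> endsH h" "b' \<in> endsH h" "a' \<in> T" "b' \<notin> T"
    using connected_graph_crossing_edge[OF connH a(1) _ b(1)] by blast
  then have "card (T \<inter> endsH h) = 1"
    using card_Int_eq_1_iff_crossing[of "endsH h" T] ends_EH[of h] by blast
  then obtain e0 where "e0 \<in> P" "fE e0 = h"
    using crossing_pendant \<open>h \<in> EH\<close> by blast
  then have "odd (card T)" using crossing_iff_odd \<open>card (T \<inter> endsH h) = 1\<close> by blast
  then have "card (T \<inter> endsH (fE e)) = 1" using crossing_iff_odd e by blast
  then obtain e' where "e' \<in> P" "fE e' = fE e" "inner_count (fV (Inr e')) + 1 = l"
    using crossing_pendant fE_in pendantD e by blast
  moreover have "e' = e" using inj_on_pendant_edges calculation(1,2) e unfolding inj_on_def by blast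
  ultimately show ?thesis by simp
qed

lemma other_end_exists:
  assumes "e \<in> P"
  obtains b where "b \<in> endsH (fE e)" "b \<noteq> fV (Inr e)"
proof -
  have "card (endsH (fE e)) = 2" using ends_EH fE_in pendantD assms by blast
  then show ?thesis using that by (metis card_2_iff insertI1 insertI2)
qed

lemma inner_count_pendants_eq:
  assumes "e \<in> P" "e' \<in> P"
  shows "inner_count (fV (Inr e)) = inner_count (fV (Inr e'))"
proof -
  obtain b where b: "b \<in> endsH (fE e')" "b \<noteq> fV (Inr e')" using other_end_exists assms(2) .
  have "fV (Inr e') \<in> VH" "b \<in> VH"
    using b(1) pendant_end_in_ends ends_EH fE_in pendantD assms(2) by blast+
  then show ?thesis
    using pendants_at_level_cut[of "fV (Inr e')" "inner_count (fV (Inr e')) + 1" b e]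
      inner_count_other_end[OF assms(2) b] assms(1) by simp
qed

lemma inner_count_bounds:
  assumes w: "w \<in> VH" and e: "e \<in> P"
  shows "inner_count (fV (Inr e)) \<le> inner_count w \<and> inner_count w \<le> inner_count (fV (Inr e)) + 1"
proof -
  have a: "fV (Inr e) \<in> VH" using pendant_end_in_ends ends_EH fE_in pendantD e by blast
  show ?thesis
    using pendants_at_level_cut[OF w _ a, of "inner_count (fV (Inr e))" e]
      pendants_at_level_cut[OF a _ w, of "inner_count (fV (Inr e)) + 2" e] e by linarith
qed

text \<open>All pendant images lie in S, the set of vertices of minimal inner_count; counting the
  vertices of G - u over H, together with card VH dvd card VG, shows that S is a singleton.\<close>
lemma pendant_images_eq:
  assumes e: "e \<in> P" and e': "e' \<in> P"
  shows "fV (Inr e) = fV (Inr e')"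
proof -
  define l where "l = inner_count (fV (Inr e))"
  define S where "S = {w\<in>VH. inner_count w = l}"
  have a: "fV (Inr e) \<in> S"
    using pendant_end_in_ends ends_EH fE_in pendantD e unfolding S_def l_def by blast
  obtain b where b: "b \<in> endsH (fE e)" "b \<noteq> fV (Inr e)" using other_end_exists e .
  then have "b \<in> VH - S"
    using inner_count_other_end[OF e b] ends_EH fE_in pendantD e unfolding S_def l_def by auto
  have "S \<subseteq> VH" unfolding S_def by auto
  have "card {w\<in>VH. fV (Inl v) = w} = 1" if "v \<in> VG - {u}" for v
  proof -
    have "{w\<in>VH. fV (Inl v) = w} = {fV (Inl v)}" using that Inl_in_Vu fV_in by auto
    then show ?thesis by simp
  qed
  then have "card (VG - {u}) = (\<Sum>w\<in>VH. inner_count w)"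
    using sum_multicount[OF finite_VH, of "VG - {u}" "\<lambda>w v. fV (Inl v) = w" 1] finite_VG by simp
  also have "\<dots> = (\<Sum>w\<in>VH. l + (if w \<in> S then 0 else 1))"
    using inner_count_bounds e unfolding S_def l_def by (intro sum.cong) fastforce+
  also have "\<dots> = l * card VH + card (VH - S)"
    using finite_VH \<open>S \<subseteq> VH\<close> by (simp add: sum.distrib sum.If_cases Diff_eq Int_commute)
  finally have count: "card (VG - {u}) = l * card VH + card (VH - S)" .
  obtain m where "card VG = m * card VH" using card_dvd by (metis dvdE mult.commute)
  moreover have "card VG = card (VG - {u}) + 1" using card_Suc_Diff1[OF finite_VG u] by simp
  moreover have "card (VH - S) < card VH"
    using a \<open>S \<subseteq> VH\<close> finite_VH by (intro psubset_card_mono) auto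
  ultimately have "card (VH - S) + 1 = card VH"
    using count by (intro remainder_eq_pred_if_mult_eq[of m _ l]) simp_all
  then have "card S = 1"
    using card_Diff_subset[OF finite_subset[OF \<open>S \<subseteq> VH\<close> finite_VH] \<open>S \<subseteq> VH\<close>]
      card_mono[OF finite_VH \<open>S \<subseteq> VH\<close>] by linarith
  moreover have "fV (Inr e') \<in> S"
    using inner_count_pendants_eq[OF e' e] pendant_end_in_ends ends_EH fE_in pendantD e'
    unfolding S_def l_def by blast
  ultimately show ?thesis using a by (metis card_1_singletonE singletonD)
qed

end

theorem mainTheorem6:
  fixes k :: nat
    and VH :: "'w set" and EH :: "'f set" and endsH :: "'f \<Rightarrow> 'w set"
    and VG :: "'v set" and EG :: "'e set" and endsG :: "'e \<Rightarrow> 'v set" and u :: 'v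
  assumes "k \<ge> 1"
    and "multigraph VH EH endsH" "connected_graph VH EH endsH"
    and "regular k VH EH endsH" "edge_colorable k EH endsH"
    and "simple_graph VG EG endsG" "connected_graph VG EG endsG" "regular k VG EG endsG"
    and "u \<in> VG"
    and "\<forall>x\<in>VH. \<forall>\<sigma>. bij_betw \<sigma> (inc_edges EG endsG u) (inc_edges EH endsH x) \<longrightarrow>
           (\<exists>fV fE. covering_projection VG EG endsG VH EH endsH fV fE \<and> fV u = x \<and>
              (\<forall>e\<in>inc_edges EG endsG u. fE e = \<sigma> e))"
  shows "(\<forall>x\<in>VH. \<forall>\<sigma>. bij_betw \<sigma> (inc_edges EG endsG u) (inc_edges EH endsH x) \<longrightarrow>
           (\<exists>fV fE. partial_covering_projection (split_V VG EG endsG u) EG (split_ends endsG u)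
                       VH EH endsH fV fE \<and>
              (\<forall>e\<in>inc_edges EG endsG u. fE e = \<sigma> e \<and> fV (Inr e) = x)))
       \<and> (\<forall>fV fE. partial_covering_projection (split_V VG EG endsG u) EG (split_ends endsG u)
                       VH EH endsH fV fE \<longrightarrow>
            (\<forall>e1\<in>inc_edges EG endsG u. \<forall>e2\<in>inc_edges EG endsG u. fV (Inr e1) = fV (Inr e2)))
       \<and> (\<forall>fV fE. partial_covering_projection (split_V VG EG endsG u) EG (split_ends endsG u)
                       VH EH endsH fV fE \<longrightarrow>
            inj_on fE (inc_edges EG endsG u) \<and>
            (\<forall>e\<in>inc_edges EG endsG u. fV (Inr e) \<in> endsH (fE e)))"
proof -
  note k = assms(1) and H = assms(2-4) and G = assms(8,9) and lift = assms(10)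
  have mgG: "multigraph VG EG endsG" using assms(6) unfolding simple_graph_def by simp
  have "card (inc_edges EG endsG u) = k" using G unfolding regular_def by simp
  then have pendants: "inc_edges EG endsG u \<noteq> {}" using k by auto
  obtain c where colouring: "\<forall>h\<in>EH. c h < k"
    "\<forall>h1\<in>EH. \<forall>h2\<in>EH. h1 \<noteq> h2 \<and> endsH h1 \<inter> endsH h2 \<noteq> {} \<longrightarrow> c h1 \<noteq> c h2"
    using assms(5) unfolding edge_colorable_def by blast
  have part_a: "\<exists>fV fE. partial_covering_projection (split_V VG EG endsG u) EG (split_ends endsG u)
                 VH EH endsH fV fE \<and> (\<forall>e\<in>inc_edges EG endsG u. fE e = \<sigma> e \<and> fV (Inr e) = x)"
    if "x \<in> VH" "bij_betw \<sigma> (inc_edges EG endsG u) (inc_edges EH endsH x)" for x \<sigma>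
    using lift that partial_covering_projection_split[OF H(2,1) mgG G(2) pendants] by force
  have "split_partial_cover k VH EH endsH c VG EG endsG u fV fE"
    if pcov: "partial_covering_projection (split_V VG EG endsG u) EG (split_ends endsG u)
                VH EH endsH fV fE" for fV fE
  proof -
    have "VH \<noteq> {}"
      using pcov pendants unfolding partial_covering_projection_def split_V_def by blast
    then have "card VH dvd card VG" using card_dvd_card_if_lifts[OF H mgG G] lift by blast
    then show ?thesis using k H colouring mgG G pcov by unfold_locales
  qed
  then show ?thesis
    using part_a split_partial_cover.pendant_images_eq split_partial_cover.inj_on_pendant_edges
      split_partial_cover.pendant_end_in_ends by metis
qed

end
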